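(* Two rigid real-analytic hypersurfaces in $\mathbb{C}^2$ $$u=z\bar z+\sum_{j,k\geq2}F_{j,k}z^j\bar z^k\qquad\text{and}\qquad u'=z'\bar z'+\sum_{j,k\geq2}F'_{j,k}z'^j\bar z'^k$$ are rigidly biholomorphically equivalent (as germs at the origin) if and only if there exist $\rho\in\mathbb{R}_{>0}$ and $\varphi\in\mathbb{R}$ such that $$F_{j,k}=\rho^{\frac{j+k-2}{2}}e^{i\varphi(j-k)}F'_{j,k}\qquad(j\geq2,\ k\geq2).$$
   Context: Coordinates on $\mathbb{C}^2$ are $(z,w)$, $w=u+iv$. A rigid biholomorphism is a local biholomorphism $(z,w)\mapsto(f(z),\rho w+g(z))$ with $f,g$ holomorphic and $\rho\in\mathbb{R}\setminus\{0\}$. The graphing functions are real-valued. *)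

theory Defs
  imports "HOL-Analysis.Analysis"
begin

text \<open>Coefficient data of a rigid hypersurface u = z zbar + sum_{j,k>=2} F_{j,k} z^j zbar^k.
Only the coefficients with j,k >= 2 matter. Admissibility: the graphing function is
real-valued (Hermitian symmetry of coefficients) and the double power series converges
absolutely on some polydisc (real-analyticity).\<close>

definition admissible_coeffs :: "(nat \<Rightarrow> nat \<Rightarrow> complex) \<Rightarrow> bool" where
  "admissible_coeffs F \<longleftrightarrow>
     (\<forall>j\<ge>2. \<forall>k\<ge>2. F k j = cnj (F j k)) \<and>
     (\<exists>r>0. (\<lambda>(j, k). norm (F j k) * r ^ (j + k)) summable_on ({2..} \<times> {2..}))"

definition graph_fun :: "(nat \<Rightarrow> nat \<Rightarrow> complex) \<Rightarrow> complex \<Rightarrow> real" where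
  "graph_fun F z = (cmod z)\<^sup>2 +
     Re (\<Sum>\<^sub>\<infinity>(j, k)\<in>{2..} \<times> {2..}. F j k * z ^ j * cnj z ^ k)"

text \<open>Rigid biholomorphic equivalence of the germs at 0 of {Re w = graph_fun F z} and
{Re w' = graph_fun F' z'}: a local biholomorphism (z,w) -> (f z, rho w + g z), fixing 0
(f, g holomorphic near 0, f' 0 /= 0, rho real nonzero), which on a neighbourhood of the
origin maps points of the first hypersurface exactly to points of the second.\<close>

definition rigid_equivalent ::
    "(nat \<Rightarrow> nat \<Rightarrow> complex) \<Rightarrow> (nat \<Rightarrow> nat \<Rightarrow> complex) \<Rightarrow> bool" where
  "rigid_equivalent F F' \<longleftrightarrow>
     (\<exists>f g (\<rho>::real) r. r > 0 \<and> f holomorphic_on ball 0 r \<and> g holomorphic_on ball 0 r \<and>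
        f 0 = 0 \<and> g 0 = 0 \<and> deriv f 0 \<noteq> 0 \<and> \<rho> \<noteq> 0 \<and>
        (\<exists>e>0. e \<le> r \<and>
          (\<forall>z w. cmod z < e \<and> cmod w < e \<longrightarrow>
             (Re w = graph_fun F z \<longleftrightarrow>
              Re (complex_of_real \<rho> * w + g z) = graph_fun F' (f z)))))"

end

(* Expand every function in sight at the origin in z and cnj z, up to an error O(|z|^(n+1)).  Such a
   jet is unique: a polynomial in z and cnj z that is O(|z|^(n+1)) is, along each ray t * u, a real
   polynomial in t of order n+1, so its homogeneous parts vanish on the unit circle, where
   cnj u = 1 / u turns them into ordinary polynomials.  A rigid equivalence gives
   rho * graph_fun F z + Re (g z) = graph_fun F' (f z) near 0.  If f z = a z + b z^m + O(|z|^(m+1))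
   with m >= 2, the only term of bidegree (1, m) in this identity is the cross term
   a * cnj b * z * cnj z^m of |f z|^2, so b = 0; inductively f is linear, f z = a z.  Then the
   coefficients of z * cnj z and of z^j * cnj z^k give rho = |a|^2 and
   |a|^2 * F j k = a^j * cnj a^k * F' j k, which is the claimed relation for a = sqrt rho * e^(i phi).
   Conversely, z -> a z, w -> |a|^2 w is a rigid equivalence. *)

theory Submission
  imports Defs "HOL-Complex_Analysis.Cauchy_Integral_Formula" "HOL-Library.Landau_Symbols"
begin

section \<open>Big-O estimates at the origin\<close>

lemma bigo_cnj:
  assumes "f \<in> O[F](g)"
  shows "(\<lambda>x. cnj (f x)) \<in> O[F](g)"
proof -
  have "(\<lambda>x. norm (cnj (f x))) \<in> O[F](\<lambda>x. norm (g x))"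
    using assms by (simp only: complex_mod_cnj landau_o.big.norm_iff)
  then show ?thesis by (simp only: landau_o.big.norm_iff)
qed

lemma eventually_nhds0_norm_less:
  "e > 0 \<Longrightarrow> eventually (\<lambda>z::'a::real_normed_vector. norm z < e) (nhds 0)"
  using eventually_nhds_in_open[of "ball 0 e" "0::'a"] by simp

lemma bigo_power_mono_nhds0:
  assumes "m \<le> n"
  shows "(\<lambda>z::'a::real_normed_field. z ^ n) \<in> O[nhds 0](\<lambda>z. z ^ m)"
proof (rule bigoI[of _ 1])
  show "eventually (\<lambda>z::'a. norm (z ^ n) \<le> 1 * norm (z ^ m)) (nhds 0)"
    using eventually_nhds0_norm_less[OF zero_less_one]
  proof eventually_elim
    case (elim z)
    then show ?case using assms by (simp add: norm_power power_decreasing)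
  qed
qed

lemma bigo_nhds0_tendsto_zero:
  assumes "f \<in> O[nhds 0](\<lambda>z. z)"
  shows "(f \<longlongrightarrow> 0) (nhds (0::'a::real_normed_field))"
proof -
  obtain c where bound: "eventually (\<lambda>z. norm (f z) \<le> c * norm z) (nhds 0)"
    using assms by (auto elim: landau_o.bigE)
  have "((\<lambda>z::'a. c * norm z) \<longlongrightarrow> c * norm (0::'a)) (nhds 0)"
    by (intro tendsto_mult_left tendsto_norm filterlim_ident)
  then have "((\<lambda>z::'a. c * norm z) \<longlongrightarrow> 0) (nhds 0)"
    by simp
  with bound show ?thesis
    by (rule Lim_null_comparison)
qed

lemma bigo_compose_nhds0:
  fixes f :: "'a::real_normed_field \<Rightarrow> 'a"
  assumes "R \<in> O[nhds 0](\<lambda>w. w ^ n)" "f \<in> O[nhds 0](\<lambda>z. z)"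
  shows "(\<lambda>z. R (f z)) \<in> O[nhds 0](\<lambda>z. z ^ n)"
proof -
  have "(\<lambda>z. R (f z)) \<in> O[nhds 0](\<lambda>z. f z ^ n)"
    using landau_o.big.compose[OF assms(1) bigo_nhds0_tendsto_zero[OF assms(2)]] .
  also have "(\<lambda>z. f z ^ n) \<in> O[nhds 0](\<lambda>z. z ^ n)"
    using landau_o.big_power[OF assms(2)] .
  finally show ?thesis .
qed

lemma power_diff_bigo:
  fixes u v h :: "'a \<Rightarrow> 'b::real_normed_field"
  assumes u: "u \<in> O[F](h)" and v: "v \<in> O[F](h)"
    and uv: "(\<lambda>x. u x - v x) \<in> O[F](\<lambda>x. h x ^ m)" and "j \<ge> 1"
  shows "(\<lambda>x. u x ^ j - v x ^ j) \<in> O[F](\<lambda>x. h x ^ (m + j - 1))"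
  using \<open>j \<ge> 1\<close>
proof (induction j rule: dec_induct)
  case base
  then show ?case using uv by simp
next
  case (step j)
  have deg: "m + Suc j - 1 = Suc (m + j - 1)" "m + Suc j - 1 = j + m"
    using step.hyps by simp_all
  have "(\<lambda>x. (u x ^ j - v x ^ j) * u x) \<in> O[F](\<lambda>x. h x ^ (m + j - 1) * h x)"
    using landau_o.big.mult[OF step.IH u] .
  then have "(\<lambda>x. (u x ^ j - v x ^ j) * u x) \<in> O[F](\<lambda>x. h x ^ (m + Suc j - 1))"
    by (simp only: deg(1) power_Suc2)
  moreover have "(\<lambda>x. v x ^ j * (u x - v x)) \<in> O[F](\<lambda>x. h x ^ j * h x ^ m)"
    using landau_o.big.mult[OF landau_o.big_power[OF v] uv] .
  then have "(\<lambda>x. v x ^ j * (u x - v x)) \<in> O[F](\<lambda>x. h x ^ (m + Suc j - 1))"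
    by (simp only: deg(2) power_add)
  ultimately have "(\<lambda>x. (u x ^ j - v x ^ j) * u x + v x ^ j * (u x - v x)) \<in> O[F](\<lambda>x. h x ^ (m + Suc j - 1))"
    by (rule sum_in_bigo(1))
  moreover have "(\<lambda>x. (u x ^ j - v x ^ j) * u x + v x ^ j * (u x - v x)) = (\<lambda>x. u x ^ Suc j - v x ^ Suc j)"
    by (simp add: fun_eq_iff algebra_simps)
  ultimately show ?case by (simp only:)
qed

lemma monomial_diff_bigo:
  fixes u v h :: "'a \<Rightarrow> complex"
  assumes u: "u \<in> O[F](h)" and v: "v \<in> O[F](h)"
    and uv: "(\<lambda>x. u x - v x) \<in> O[F](\<lambda>x. h x ^ m)" and "j \<ge> 1" "k \<ge> 1"
  shows "(\<lambda>x. u x ^ j * cnj (u x) ^ k - v x ^ j * cnj (v x) ^ k) \<in> O[F](\<lambda>x. h x ^ (m + j + k - 1))"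
proof -
  have "(\<lambda>x. (u x ^ j - v x ^ j) * cnj (u x) ^ k) \<in> O[F](\<lambda>x. h x ^ (m + j - 1) * h x ^ k)"
    using power_diff_bigo[OF u v uv \<open>j \<ge> 1\<close>] landau_o.big_power[OF bigo_cnj[OF u]]
    by (rule landau_o.big.mult)
  moreover have "(\<lambda>x. cnj (u x) - cnj (v x)) \<in> O[F](\<lambda>x. h x ^ m)"
    using bigo_cnj[OF uv] by simp
  then have "(\<lambda>x. v x ^ j * (cnj (u x) ^ k - cnj (v x) ^ k)) \<in> O[F](\<lambda>x. h x ^ j * h x ^ (m + k - 1))"
    using landau_o.big_power[OF v] power_diff_bigo[OF bigo_cnj[OF u] bigo_cnj[OF v] _ \<open>k \<ge> 1\<close>]
    by (intro landau_o.big.mult)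
  moreover have "m + j - 1 + k = m + j + k - 1" "j + (m + k - 1) = m + j + k - 1"
    using assms(4,5) by simp_all
  then have "h x ^ (m + j - 1) * h x ^ k = h x ^ (m + j + k - 1)"
    "h x ^ j * h x ^ (m + k - 1) = h x ^ (m + j + k - 1)" for x
    by (simp_all only: power_add[symmetric])
  ultimately have "(\<lambda>x. (u x ^ j - v x ^ j) * cnj (u x) ^ k + v x ^ j * (cnj (u x) ^ k - cnj (v x) ^ k))
      \<in> O[F](\<lambda>x. h x ^ (m + j + k - 1))"
    by (intro sum_in_bigo) simp_all
  then show ?thesis
    by (simp add: algebra_simps)
qed

lemma zcnj_monomial_bigo: "(\<lambda>z. z ^ p * cnj z ^ q) \<in> O[F](\<lambda>z. z ^ (p + q))"
  by (rule bigoI[of _ 1]) (simp add: norm_mult norm_power power_add)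

section \<open>Jets in z and its conjugate\<close>

definition jet_poly :: "nat \<Rightarrow> (nat \<Rightarrow> nat \<Rightarrow> complex) \<Rightarrow> complex \<Rightarrow> complex" where
  "jet_poly n c z = (\<Sum>d\<le>n. \<Sum>j\<le>d. c j (d - j) * z ^ j * cnj z ^ (d - j))"

definition has_jet :: "(complex \<Rightarrow> complex) \<Rightarrow> nat \<Rightarrow> (nat \<Rightarrow> nat \<Rightarrow> complex) \<Rightarrow> bool" where
  "has_jet h n c \<longleftrightarrow> (\<lambda>z. h z - jet_poly n c z) \<in> O[nhds 0](\<lambda>z. z ^ Suc n)"

lemma jet_poly_add: "jet_poly n (\<lambda>j k. c j k + c' j k) z = jet_poly n c z + jet_poly n c' z"
  unfolding jet_poly_def by (simp add: sum.distrib distrib_right)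

lemma jet_poly_cmult: "jet_poly n (\<lambda>j k. s * c j k) z = s * jet_poly n c z"
  unfolding jet_poly_def by (simp add: sum_distrib_left mult.assoc)

lemma jet_poly_cnj: "cnj (jet_poly n c z) = jet_poly n (\<lambda>j k. cnj (c k j)) z"
proof -
  have "cnj (jet_poly n c z) = (\<Sum>d\<le>n. \<Sum>j\<le>d. cnj (c j (d - j)) * cnj z ^ j * z ^ (d - j))"
    unfolding jet_poly_def by simp
  also have "\<dots> = jet_poly n (\<lambda>j k. cnj (c k j)) z"
    unfolding jet_poly_def
  proof (rule sum.cong[OF refl])
    fix d
    show "(\<Sum>j\<le>d. cnj (c j (d - j)) * cnj z ^ j * z ^ (d - j)) =
          (\<Sum>j\<le>d. cnj (c (d - j) j) * z ^ j * cnj z ^ (d - j))"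
      by (rule sum.reindex_bij_witness[of _ "\<lambda>j. d - j" "\<lambda>j. d - j"]) (auto simp: mult_ac)
  qed
  finally show ?thesis .
qed

lemma jet_poly_scale: "jet_poly n c (a * z) = jet_poly n (\<lambda>j k. c j k * a ^ j * cnj a ^ k) z"
  unfolding jet_poly_def by (simp add: power_mult_distrib mult_ac)

lemma jet_poly_cong:
  assumes "\<And>j k. j + k \<le> n \<Longrightarrow> c j k = c' j k"
  shows "jet_poly n c = jet_poly n c'"
  unfolding jet_poly_def fun_eq_iff using assms by (auto intro!: sum.cong)

lemma jet_poly_monomial:
  assumes "p + q \<le> n"
  shows "jet_poly n (\<lambda>j k. if j = p \<and> k = q then s else 0) z = s * z ^ p * cnj z ^ q"
proof -
  have "(\<Sum>j\<le>d. (if j = p \<and> d - j = q then s else 0) * z ^ j * cnj z ^ (d - j)) =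
        (if d = p + q then s * z ^ p * cnj z ^ q else 0)" for d
  proof (cases "d = p + q")
    case True
    then have "(\<Sum>j\<le>d. (if j = p \<and> d - j = q then s else 0) * z ^ j * cnj z ^ (d - j)) =
               (\<Sum>j\<le>d. if j = p then s * z ^ p * cnj z ^ q else 0)"
      by (intro sum.cong) auto
    then show ?thesis using True by simp
  qed (auto intro!: sum.neutral)
  then show ?thesis
    unfolding jet_poly_def using assms by simp
qed

lemma jet_poly_holomorphic:
  "jet_poly n (\<lambda>j k. if k = 0 then b j else 0) z = (\<Sum>j\<le>n. b j * z ^ j)"
proof -
  have "(\<Sum>j\<le>d. (if d - j = 0 then b j else 0) * z ^ j * cnj z ^ (d - j)) = b d * z ^ d" for d
  proof -
    have "(\<Sum>j\<le>d. (if d - j = 0 then b j else 0) * z ^ j * cnj z ^ (d - j)) =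
          (\<Sum>j\<le>d. if j = d then b d * z ^ d else 0)"
      by (intro sum.cong) auto
    then show ?thesis by simp
  qed
  then show ?thesis unfolding jet_poly_def by simp
qed

lemma jet_poly_pairs:
  "jet_poly n c z = (\<Sum>(j, k)\<in>{(j, k). j + k \<le> n}. c j k * z ^ j * cnj z ^ k)"
  unfolding jet_poly_def by (rule sum.triangle_reindex_eq[symmetric])

lemma jet_poly_polar:
  fixes t :: real
  shows "jet_poly n c (of_real t * u) = (\<Sum>d\<le>n. (\<Sum>j\<le>d. c j (d - j) * u ^ j * cnj u ^ (d - j)) * of_real t ^ d)"
  unfolding jet_poly_def sum_distrib_right
proof (intro sum.cong refl)
  fix d j :: nat assume "j \<in> {..d}"
  then have "of_real t ^ d = (of_real t ^ j * of_real t ^ (d - j) :: complex)"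
    by (simp flip: power_add)
  then show "c j (d - j) * (of_real t * u) ^ j * cnj (of_real t * u) ^ (d - j) =
             c j (d - j) * u ^ j * cnj u ^ (d - j) * of_real t ^ d"
    by (simp add: power_mult_distrib mult_ac)
qed

lemma has_jet_add:
  assumes "has_jet h n c" "has_jet h' n c'"
  shows "has_jet (\<lambda>z. h z + h' z) n (\<lambda>j k. c j k + c' j k)"
proof -
  have "(\<lambda>z. (h z - jet_poly n c z) + (h' z - jet_poly n c' z)) \<in> O[nhds 0](\<lambda>z. z ^ Suc n)"
    using assms unfolding has_jet_def by (rule sum_in_bigo)
  then show ?thesis
    unfolding has_jet_def jet_poly_add by (simp add: algebra_simps)
qed

lemma has_jet_cmult:
  assumes "has_jet h n c"
  shows "has_jet (\<lambda>z. s * h z) n (\<lambda>j k. s * c j k)"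
  using assms unfolding has_jet_def jet_poly_cmult by (simp flip: right_diff_distrib)

lemma has_jet_diff:
  assumes "has_jet h n c" "has_jet h' n c'"
  shows "has_jet (\<lambda>z. h z - h' z) n (\<lambda>j k. c j k - c' j k)"
  using has_jet_add[OF assms(1) has_jet_cmult[OF assms(2), of "-1"]] by simp

lemma has_jet_cnj:
  assumes "has_jet h n c"
  shows "has_jet (\<lambda>z. cnj (h z)) n (\<lambda>j k. cnj (c k j))"
  using bigo_cnj[OF assms[unfolded has_jet_def]] unfolding has_jet_def jet_poly_cnj[symmetric] by simp

lemma has_jet_scale:
  assumes "has_jet h n c"
  shows "has_jet (\<lambda>z. h (a * z)) n (\<lambda>j k. c j k * a ^ j * cnj a ^ k)"
proof -
  have "(\<lambda>z. a * z) \<in> O[nhds 0](\<lambda>z. z)" by simp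
  from bigo_compose_nhds0[OF assms[unfolded has_jet_def] this] show ?thesis
    unfolding has_jet_def jet_poly_scale[symmetric] .
qed

lemma has_jet_perturb:
  assumes "has_jet h n c" "(\<lambda>z. h' z - h z) \<in> O[nhds 0](\<lambda>z. z ^ Suc n)"
  shows "has_jet h' n c"
  using sum_in_bigo(1)[OF assms(2) assms(1)[unfolded has_jet_def]] unfolding has_jet_def by simp

lemma has_jet_monomial: "has_jet (\<lambda>z. s * z ^ p * cnj z ^ q) n (\<lambda>j k. if j = p \<and> k = q then s else 0)"
proof (cases "p + q \<le> n")
  case True
  then show ?thesis
    unfolding has_jet_def jet_poly_monomial[OF True] by simp
next
  case False
  have "jet_poly n (\<lambda>j k. if j = p \<and> k = q then s else 0) = jet_poly n (\<lambda>_ _. 0)"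
    using False by (intro jet_poly_cong) auto
  moreover have "jet_poly n (\<lambda>_ _. 0) z = 0" for z
    unfolding jet_poly_def by simp
  moreover have "(\<lambda>z. z ^ p * cnj z ^ q) \<in> O[nhds 0](\<lambda>z. z ^ Suc n)"
    using False by (intro landau_o.big_trans[OF zcnj_monomial_bigo bigo_power_mono_nhds0]) simp
  then have "(\<lambda>z. s * (z ^ p * cnj z ^ q)) \<in> O[nhds 0](\<lambda>z. z ^ Suc n)"
    by simp
  ultimately show ?thesis
    unfolding has_jet_def by (simp add: mult.assoc)
qed

lemma polyfun_real_const_coeff_zero:
  fixes a :: "nat \<Rightarrow> complex"
  assumes "((\<lambda>t. \<Sum>d\<le>n. a d * of_real t ^ d) \<longlongrightarrow> 0) (at_right 0)"
  shows "a 0 = 0"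
proof -
  have "((\<lambda>t. \<Sum>d\<le>n. a d * of_real t ^ d) \<longlongrightarrow> (\<Sum>d\<le>n. a d * of_real 0 ^ d)) (at_right 0)"
    by (intro tendsto_intros)
  from tendsto_unique[OF _ this assms] show ?thesis
    by (simp add: zero_power)
qed

lemma polyfun_bounded_by_power_coeffs_zero:
  fixes a :: "nat \<Rightarrow> complex"
  assumes "eventually (\<lambda>t. norm (\<Sum>d\<le>n. a d * of_real t ^ d) \<le> C * t ^ Suc n) (at_right 0)"
    and "d \<le> n"
  shows "a d = 0"
  using assms
proof (induction n arbitrary: a d)
  case 0
  have "((\<lambda>t::real. C * t ^ Suc 0) \<longlongrightarrow> 0) (at_right 0)"
    by (auto intro!: tendsto_eq_intros)
  with "0.prems"(1) have "((\<lambda>t. \<Sum>d\<le>0. a d * of_real t ^ d) \<longlongrightarrow> 0) (at_right 0)"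
    by (rule Lim_null_comparison)
  then have "a 0 = 0" by (rule polyfun_real_const_coeff_zero)
  then show ?case using "0.prems"(2) by simp
next
  case (Suc n)
  have "((\<lambda>t::real. C * t ^ Suc (Suc n)) \<longlongrightarrow> 0) (at_right 0)"
    by (auto intro!: tendsto_eq_intros)
  with Suc.prems(1) have "((\<lambda>t. \<Sum>d\<le>Suc n. a d * of_real t ^ d) \<longlongrightarrow> 0) (at_right 0)"
    by (rule Lim_null_comparison)
  then have a0: "a 0 = 0" by (rule polyfun_real_const_coeff_zero)
  have shift: "(\<Sum>d\<le>Suc n. a d * of_real t ^ d) = of_real t * (\<Sum>d\<le>n. a (Suc d) * of_real t ^ d)" for t
    unfolding sum.atMost_Suc_shift using a0 by (simp add: sum_distrib_left mult_ac)
  have "eventually (\<lambda>t. norm (\<Sum>d\<le>n. a (Suc d) * of_real t ^ d) \<le> C * t ^ Suc n) (at_right 0)"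
    using Suc.prems(1) eventually_at_right_less[of "0::real"]
  proof eventually_elim
    case (elim t)
    from elim(1) have "norm (of_real t * (\<Sum>d\<le>n. a (Suc d) * of_real t ^ d)) \<le> C * t ^ Suc (Suc n)"
      by (simp only: shift)
    then have "t * norm (\<Sum>d\<le>n. a (Suc d) * of_real t ^ d) \<le> t * (C * t ^ Suc n)"
      using elim(2) by (simp add: norm_mult mult_ac)
    then show ?case using elim(2) by simp
  qed
  then have "a (Suc d') = 0" if "d' \<le> n" for d'
    using Suc.IH[of "\<lambda>d. a (Suc d)" d'] that by simp
  then show ?case
    using a0 Suc.prems(2) by (cases d) auto
qed

lemma infinite_unit_circle: "infinite (sphere (0::complex) 1)"
proof
  assume "finite (sphere (0::complex) 1)"
  moreover have "connected (sphere (0::complex) 1)"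
    by (rule connected_sphere) simp
  moreover have "1 \<in> sphere (0::complex) 1" "-1 \<in> sphere (0::complex) 1"
    by simp_all
  ultimately obtain a where "1 = a" "-1 = (a::complex)"
    using connected_finite_iff_sing by (metis empty_iff singletonD)
  then show False by simp
qed

lemma homogeneous_poly_vanishing_on_circle:
  fixes b :: "nat \<Rightarrow> complex"
  assumes "\<And>u. norm u = 1 \<Longrightarrow> (\<Sum>j\<le>d. b j * u ^ j * cnj u ^ (d - j)) = 0"
    and "j \<le> d"
  shows "b j = 0"
proof -
  have "(\<Sum>j\<le>d. b j * w ^ j) = 0" if w: "w \<in> sphere 0 1" for w
  proof -
    \<comment> \<open>\<open>cnj u = 1 / u\<close>, so \<open>u ^ d\<close> times the homogeneous part is a polynomial in \<open>w = u\<^sup>2\<close>\<close>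
    define u where "u = csqrt w"
    have u: "norm u = 1" "u * cnj u = 1" "u ^ 2 = w"
      using w by (simp_all add: u_def norm_csqrt flip: complex_norm_square)
    have rotate: "u ^ d * (b j * u ^ j * cnj u ^ (d - j)) = b j * w ^ j" if "j \<le> d" for j
    proof -
      have "u ^ d * (b j * u ^ j * cnj u ^ (d - j)) = b j * (u ^ 2) ^ j * (u * cnj u) ^ (d - j)"
        using that by (simp add: power_mult_distrib power_mult[symmetric] mult_ac add.commute flip: power_add)
      then show ?thesis by (simp add: u(2,3))
    qed
    have "(\<Sum>j\<le>d. b j * w ^ j) = u ^ d * (\<Sum>j\<le>d. b j * u ^ j * cnj u ^ (d - j))"
      unfolding sum_distrib_left by (rule sum.cong) (simp_all add: rotate)
    then show ?thesis using assms(1)[OF u(1)] by simp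
  qed
  then have "infinite {w. (\<Sum>j\<le>d. b j * w ^ j) = 0}"
    by (intro infinite_super[OF _ infinite_unit_circle]) auto
  then show ?thesis
    using polyfun_finite_roots[of b d] assms(2) by auto
qed

lemma has_jet_eventually_zero_coeffs:
  assumes jet: "has_jet h n c" and zero: "eventually (\<lambda>z. h z = 0) (nhds 0)" and "j + k \<le> n"
  shows "c j k = 0"
proof -
  from zero have "eventually (\<lambda>z. h z - jet_poly n c z = - jet_poly n c z) (nhds 0)"
    by eventually_elim simp
  with jet have "(\<lambda>z. - jet_poly n c z) \<in> O[nhds 0](\<lambda>z. z ^ Suc n)"
    unfolding has_jet_def by (rule landau_o.big.in_cong[THEN iffD1, rotated])
  then have "(\<lambda>z. jet_poly n c z) \<in> O[nhds 0](\<lambda>z. z ^ Suc n)"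
    by (rule landau_o.big.uminus_in_iff[THEN iffD1])
  then obtain C where "eventually (\<lambda>z. norm (jet_poly n c z) \<le> C * norm (z ^ Suc n)) (nhds 0)"
    by (rule landau_o.bigE)
  then have "eventually (\<lambda>z. norm (jet_poly n c z) \<le> C * norm z ^ Suc n) (nhds 0)"
    by (simp only: norm_power)
  then obtain \<delta> where "\<delta> > 0" and \<delta>: "\<And>z. norm z < \<delta> \<Longrightarrow> norm (jet_poly n c z) \<le> C * norm z ^ Suc n"
    unfolding eventually_nhds_metric dist_norm by auto
  \<comment> \<open>along the ray \<open>t * u\<close> the jet is a real polynomial in \<open>t\<close> with the homogeneous parts at \<open>u\<close> as coefficients\<close>
  have homogeneous_part_zero: "(\<Sum>i\<le>d. c i (d - i) * u ^ i * cnj u ^ (d - i)) = 0"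
    if u: "norm u = 1" and "d \<le> n" for u d
  proof (rule polyfun_bounded_by_power_coeffs_zero[OF _ \<open>d \<le> n\<close>])
    show "eventually (\<lambda>t. norm (\<Sum>d\<le>n. (\<Sum>i\<le>d. c i (d - i) * u ^ i * cnj u ^ (d - i)) * of_real t ^ d)
        \<le> C * t ^ Suc n) (at_right 0)"
      unfolding eventually_at_right_field
    proof (intro exI conjI allI impI)
      fix t :: real assume "0 < t" "t < \<delta>"
      with u have "norm (of_real t * u) < \<delta>" "norm (of_real t * u) = t"
        by (simp_all add: norm_mult)
      with \<delta>[of "of_real t * u"] show "norm (\<Sum>d\<le>n. (\<Sum>i\<le>d. c i (d - i) * u ^ i * cnj u ^ (d - i)) * of_real t ^ d)
          \<le> C * t ^ Suc n"
        by (simp only: jet_poly_polar)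
    qed (rule \<open>\<delta> > 0\<close>)
  qed
  have "c j (j + k - j) = 0"
    by (rule homogeneous_poly_vanishing_on_circle[of "\<lambda>i. c i (j + k - i)" "j + k" j])
      (use homogeneous_part_zero assms(3) in auto)
  then show ?thesis by simp
qed

section \<open>Taylor expansions of holomorphic functions\<close>

lemma holomorphic_taylor_bigo:
  assumes holo: "f holomorphic_on ball 0 r" and "r > 0"
  shows "(\<lambda>z. f z - (\<Sum>m<N. (deriv ^^ m) f 0 / fact m * z ^ m)) \<in> O[nhds 0](\<lambda>z. z ^ N)"
proof -
  define a where "a m = (deriv ^^ m) f 0 / fact m" for m
  define K where "K = complex_of_real (r / 2)"
  define T where "T z = (\<Sum>i. a (i + N) * z ^ i)" for z
  have sums: "(\<lambda>m. a m * z ^ m) sums f z" if "norm z < r" for z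
    using holomorphic_power_series[OF holo, of z] that by (simp add: a_def)
  have "summable (\<lambda>m. a m * K ^ m)"
    using sums[of K] \<open>r > 0\<close> by (simp add: K_def sums_iff)
  then have "summable (\<lambda>i. a (i + N) * K ^ (i + N))"
    by (rule summable_ignore_initial_segment)
  then have "summable (\<lambda>i. inverse (K ^ N) * (a (i + N) * K ^ (i + N)))"
    by (rule summable_mult)
  then have summable_K: "summable (\<lambda>i. a (i + N) * K ^ i)"
    using \<open>r > 0\<close> by (simp add: K_def power_add field_simps)
  have remainder: "f z - (\<Sum>m<N. a m * z ^ m) = z ^ N * T z" if z: "norm z < r / 2" for z
  proof -
    have "(\<lambda>i. a (i + N) * z ^ i) sums T z"
      unfolding T_def using z \<open>r > 0\<close>
      by (intro summable_sums powser_inside[OF summable_K]) (simp add: K_def)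
    then have "(\<lambda>i. z ^ N * (a (i + N) * z ^ i)) sums (z ^ N * T z)"
      by (rule sums_mult)
    then have "(\<lambda>i. a (i + N) * z ^ (i + N)) sums (z ^ N * T z)"
      by (simp add: power_add mult_ac)
    moreover have "(\<lambda>i. a (i + N) * z ^ (i + N)) sums (f z - (\<Sum>m<N. a m * z ^ m))"
      using sums_split_initial_segment[OF sums[of z], of N] z \<open>r > 0\<close> by simp
    ultimately show ?thesis
      using sums_unique2 by blast
  qed
  \<comment> \<open>the remainder is \<open>z ^ N\<close> times a power series, which is continuous and hence bounded at 0\<close>
  have "isCont T 0"
    unfolding T_def using \<open>r > 0\<close> by (intro isCont_powser[OF summable_K]) (simp add: K_def)
  then have "T \<in> O[nhds 0](\<lambda>_. 1)"
    by (intro bigoI_tendsto[where c = "T 0"]) (simp_all add: tendsto_nhds_iff isCont_def)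
  then have "(\<lambda>z. z ^ N * T z) \<in> O[nhds 0](\<lambda>z. z ^ N * 1)"
    by (rule landau_o.big.mult_left)
  moreover have "eventually (\<lambda>z. z ^ N * T z = f z - (\<Sum>m<N. a m * z ^ m)) (nhds 0)"
    using eventually_nhds0_norm_less[of "r / 2"] \<open>r > 0\<close> by (auto elim!: eventually_mono simp: remainder)
  ultimately show ?thesis
    unfolding a_def by (simp add: landau_o.big.in_cong)
qed

lemma has_jet_holomorphic:
  assumes "f holomorphic_on ball 0 r" "r > 0"
  shows "has_jet f n (\<lambda>j k. if k = 0 then (deriv ^^ j) f 0 / fact j else 0)"
  using holomorphic_taylor_bigo[OF assms, of "Suc n"]
  unfolding has_jet_def jet_poly_holomorphic by (simp add: lessThan_Suc_atMost)

lemma holomorphic_expansion_first_nonlinear: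
  assumes "f holomorphic_on ball 0 r" "r > 0" "f 0 = 0" "m \<ge> 2"
    and "\<And>i. 2 \<le> i \<Longrightarrow> i < m \<Longrightarrow> (deriv ^^ i) f 0 = 0"
  shows "(\<lambda>z. f z - deriv f 0 * z - (deriv ^^ m) f 0 / fact m * z ^ m) \<in> O[nhds 0](\<lambda>z. z ^ Suc m)"
proof -
  have "(\<Sum>i<Suc m. (deriv ^^ i) f 0 / fact i * z ^ i) = deriv f 0 * z + (deriv ^^ m) f 0 / fact m * z ^ m" for z
  proof -
    have "(\<Sum>i<Suc m. (deriv ^^ i) f 0 / fact i * z ^ i) =
          (\<Sum>i<Suc m. (if i = 1 then deriv f 0 * z else 0) + (if i = m then (deriv ^^ m) f 0 / fact m * z ^ m else 0))"
    proof (rule sum.cong[OF refl])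
      fix i assume "i \<in> {..<Suc m}"
      then have "i \<le> m" by simp
      then consider "i = 0" | "i = 1" | "2 \<le> i \<and> i < m" | "i = m" by linarith
      then show "(deriv ^^ i) f 0 / fact i * z ^ i =
          (if i = 1 then deriv f 0 * z else 0) + (if i = m then (deriv ^^ m) f 0 / fact m * z ^ m else 0)"
        by cases (use assms in auto)
    qed
    also have "\<dots> = deriv f 0 * z + (deriv ^^ m) f 0 / fact m * z ^ m"
      using assms(4) by (simp add: sum.distrib)
    finally show ?thesis .
  qed
  then show ?thesis
    using holomorphic_taylor_bigo[OF assms(1,2), of "Suc m"] by (simp add: diff_diff_eq)
qed

section \<open>Jets of the graphing function\<close>

definition graph_series :: "(nat \<Rightarrow> nat \<Rightarrow> complex) \<Rightarrow> complex \<Rightarrow> complex" where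
  "graph_series F z = (\<Sum>\<^sub>\<infinity>(j, k)\<in>{2..} \<times> {2..}. F j k * z ^ j * cnj z ^ k)"

definition graph_series_coeffs :: "(nat \<Rightarrow> nat \<Rightarrow> complex) \<Rightarrow> nat \<Rightarrow> nat \<Rightarrow> complex" where
  "graph_series_coeffs F j k = (if 2 \<le> j \<and> 2 \<le> k then F j k else 0)"

lemma norm_monomial_le:
  fixes z :: complex
  assumes "r > 0" "norm z \<le> r" "m \<le> j + k"
  shows "norm (c * z ^ j * cnj z ^ k) \<le> norm c * r ^ (j + k) * (norm z / r) ^ m"
proof -
  have "norm z ^ (j + k) = r ^ (j + k) * (norm z / r) ^ (j + k)"
    using assms(1) by (simp add: power_divide)
  also have "\<dots> \<le> r ^ (j + k) * (norm z / r) ^ m"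
    using assms by (intro mult_left_mono power_decreasing) auto
  finally show ?thesis
    by (simp add: norm_mult norm_power power_add mult_left_mono mult.assoc)
qed

lemma zcnj_series_summable_bound:
  fixes z :: complex
  assumes "r > 0" "norm z < r" and summable: "(\<lambda>(j, k). norm (F j k) * r ^ (j + k)) summable_on A"
    and tail: "\<And>j k. (j, k) \<in> A \<Longrightarrow> m \<le> j + k"
  shows "(\<lambda>(j, k). F j k * z ^ j * cnj z ^ k) summable_on A"
    and "norm (\<Sum>\<^sub>\<infinity>(j, k)\<in>A. F j k * z ^ j * cnj z ^ k)
      \<le> (\<Sum>\<^sub>\<infinity>(j, k)\<in>A. norm (F j k) * r ^ (j + k)) * (norm z / r) ^ m"
proof -
  define h where "h = (\<lambda>(j, k). F j k * z ^ j * cnj z ^ k)"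
  define w where "w = (\<lambda>(j, k). norm (F j k) * r ^ (j + k))"
  have bound: "norm (h p) \<le> w p * (norm z / r) ^ m" if "p \<in> A" for p
  proof (cases p)
    case (Pair j k)
    with norm_monomial_le[OF \<open>r > 0\<close> _ tail, of z j k "F j k"] that assms(2) show ?thesis
      by (simp add: h_def w_def)
  qed
  have weighted: "(\<lambda>p. w p * (norm z / r) ^ m) summable_on A"
    using summable unfolding w_def by (rule summable_on_cmult_left)
  have "(\<lambda>p. norm (h p)) summable_on A"
    by (rule Infinite_Sum.abs_summable_on_comparison_test'[OF weighted bound])
  then show "h summable_on A"
    by (rule abs_summable_summable)
  have "norm (infsum h A) \<le> infsum (\<lambda>p. norm (h p)) A"
    by (rule norm_infsum_bound) fact
  also have "\<dots> \<le> infsum (\<lambda>p. w p * (norm z / r) ^ m) A"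
    by (rule infsum_mono) (use \<open>(\<lambda>p. norm (h p)) summable_on A\<close> weighted bound in auto)
  also have "\<dots> = infsum w A * (norm z / r) ^ m"
    by (rule infsum_cmult_left')
  finally show "norm (infsum h A) \<le> infsum w A * (norm z / r) ^ m" .
qed

lemma has_jet_graph_series:
  assumes "admissible_coeffs F"
  shows "has_jet (graph_series F) n (graph_series_coeffs F)"
proof -
  define A where "A = ({2..} \<times> {2..} :: (nat \<times> nat) set)"
  define B where "B = {(j, k) \<in> A. j + k \<le> n}"
  define w where "w r = (\<lambda>(j, k). norm (F j k) * r ^ (j + k))" for r :: real
  obtain r where "r > 0" and w_summable: "w r summable_on A"
    using assms unfolding admissible_coeffs_def A_def w_def by blast
  have "B \<subseteq> {..n} \<times> {..n}" "B \<subseteq> A"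
    unfolding B_def A_def by auto
  then have "finite B" by (auto intro: finite_subset)
  have jet_eq: "jet_poly n (graph_series_coeffs F) z = (\<Sum>(j, k)\<in>B. F j k * z ^ j * cnj z ^ k)" for z
  proof -
    have "{(j, k). j + k \<le> n} \<subseteq> {..n} \<times> {..n}" by auto
    then have "finite {(j, k). j + k \<le> (n::nat)}" by (rule finite_subset) auto
    then show ?thesis
      unfolding jet_poly_pairs graph_series_coeffs_def B_def A_def
      by (intro sum.mono_neutral_cong_right) (auto split: if_splits)
  qed
  define K where "K = infsum (w r) A"
  have "eventually (\<lambda>z. norm (graph_series F z - jet_poly n (graph_series_coeffs F) z)
      \<le> K / r ^ Suc n * norm (z ^ Suc n)) (nhds 0)"
    using eventually_nhds0_norm_less[OF \<open>r > 0\<close>]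
  proof eventually_elim
    case (elim z)
    define h where "h = (\<lambda>(j, k). F j k * z ^ j * cnj z ^ k)"
    have "h summable_on A"
      using zcnj_series_summable_bound(1)[OF \<open>r > 0\<close> elim w_summable[unfolded w_def], of 0]
      by (simp add: h_def)
    have "graph_series F z - jet_poly n (graph_series_coeffs F) z = infsum h (A - B)"
      unfolding graph_series_def jet_eq
      using infsum_Diff[OF \<open>h summable_on A\<close> summable_on_subset[OF \<open>h summable_on A\<close> \<open>B \<subseteq> A\<close>] \<open>B \<subseteq> A\<close>]
        \<open>finite B\<close> by (simp add: h_def A_def)
    also have "norm \<dots> \<le> infsum (w r) (A - B) * (norm z / r) ^ Suc n"
      using zcnj_series_summable_bound(2)[OF \<open>r > 0\<close> elim, of F "A - B" "Suc n"]
        summable_on_subset[OF w_summable, of "A - B"]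
      by (force simp: h_def w_def B_def)
    also have "\<dots> \<le> K * (norm z / r) ^ Suc n"
      unfolding K_def using \<open>r > 0\<close>
      by (intro mult_right_mono infsum_mono2 summable_on_subset[OF w_summable] w_summable)
        (auto simp: w_def)
    also have "\<dots> = K / r ^ Suc n * norm (z ^ Suc n)"
      by (simp add: power_divide norm_power norm_mult)
    finally show ?case .
  qed
  then show ?thesis
    unfolding has_jet_def by (rule bigoI)
qed

lemma graph_series_compose_diff_bigo:
  assumes F: "admissible_coeffs F" and u: "u \<in> O[nhds 0](\<lambda>z. z)" and v: "v \<in> O[nhds 0](\<lambda>z. z)"
    and uv: "(\<lambda>z. u z - v z) \<in> O[nhds 0](\<lambda>z. z ^ m)"
  shows "(\<lambda>z. graph_series F (u z) - graph_series F (v z)) \<in> O[nhds 0](\<lambda>z. z ^ (m + 3))"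
proof -
  define c where "c = graph_series_coeffs F"
  define R where "R w = graph_series F w - jet_poly (m + 2) c w" for w
  have "Suc (m + 2) = m + 3" by simp
  then have "R \<in> O[nhds 0](\<lambda>w. w ^ (m + 3))"
    using has_jet_graph_series[OF F, of "m + 2"] unfolding has_jet_def R_def c_def by metis
  then have Ru: "(\<lambda>z. R (u z)) \<in> O[nhds 0](\<lambda>z. z ^ (m + 3))"
    and Rv: "(\<lambda>z. R (v z)) \<in> O[nhds 0](\<lambda>z. z ^ (m + 3))"
    using bigo_compose_nhds0 u v by blast+
  have "(\<lambda>z. c i (d - i) * (u z ^ i * cnj (u z) ^ (d - i) - v z ^ i * cnj (v z) ^ (d - i)))
      \<in> O[nhds 0](\<lambda>z. z ^ (m + 3))" if "i \<le> d" for i d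
  proof (cases "2 \<le> i \<and> 2 \<le> d - i")
    case True
    have "(\<lambda>z. u z ^ i * cnj (u z) ^ (d - i) - v z ^ i * cnj (v z) ^ (d - i))
        \<in> O[nhds 0](\<lambda>z. z ^ (m + i + (d - i) - 1))"
      using True by (intro monomial_diff_bigo[OF u v]) (simp_all add: uv)
    also have "(\<lambda>z. z ^ (m + i + (d - i) - 1)) \<in> O[nhds 0](\<lambda>z::complex. z ^ (m + 3))"
      using True by (intro bigo_power_mono_nhds0) linarith
    finally show ?thesis by simp
  qed (auto simp: c_def graph_series_coeffs_def)
  then have "(\<lambda>z. \<Sum>d\<le>m + 2. \<Sum>i\<le>d. c i (d - i) * (u z ^ i * cnj (u z) ^ (d - i) - v z ^ i * cnj (v z) ^ (d - i)))
      \<in> O[nhds 0](\<lambda>z. z ^ (m + 3))"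
    by (intro big_sum_in_bigo) simp
  then have "(\<lambda>z. jet_poly (m + 2) c (u z) - jet_poly (m + 2) c (v z)) \<in> O[nhds 0](\<lambda>z. z ^ (m + 3))"
    unfolding jet_poly_def by (simp add: algebra_simps sum_subtractf)
  with sum_in_bigo(2)[OF Ru Rv]
  have "(\<lambda>z. R (u z) - R (v z) + (jet_poly (m + 2) c (u z) - jet_poly (m + 2) c (v z)))
      \<in> O[nhds 0](\<lambda>z. z ^ (m + 3))"
    by (rule sum_in_bigo(1))
  then show ?thesis
    unfolding R_def by simp
qed

lemma of_real_graph_fun:
  "complex_of_real (graph_fun F z) = z * cnj z + (graph_series F z + cnj (graph_series F z)) / 2"
  unfolding graph_fun_def graph_series_def complex_add_cnj
  by (simp add: complex_norm_square[symmetric])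

definition graph_jet :: "(nat \<Rightarrow> nat \<Rightarrow> complex) \<Rightarrow> nat \<Rightarrow> nat \<Rightarrow> complex" where
  "graph_jet F j k = (if j = 1 \<and> k = 1 then 1 else graph_series_coeffs F j k)"

lemma has_jet_graph_fun:
  assumes F: "admissible_coeffs F"
  shows "has_jet (\<lambda>z. complex_of_real (graph_fun F z)) n (graph_jet F)"
proof -
  have series: "has_jet (graph_series F) n (graph_series_coeffs F)"
    by (rule has_jet_graph_series[OF F])
  have "has_jet (\<lambda>z. 1 * z ^ 1 * cnj z ^ 1 + 1 / 2 * (graph_series F z + cnj (graph_series F z))) n
      (\<lambda>j k. (if j = 1 \<and> k = 1 then 1 else 0) +
             1 / 2 * (graph_series_coeffs F j k + cnj (graph_series_coeffs F k j)))"
    by (rule has_jet_add[OF has_jet_monomial has_jet_cmult[OF has_jet_add[OF series has_jet_cnj[OF series]]]])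
  moreover have "(\<lambda>j k. (if j = 1 \<and> k = 1 then 1 else 0) +
      1 / 2 * (graph_series_coeffs F j k + cnj (graph_series_coeffs F k j))) = graph_jet F"
  proof (intro ext)
    fix j k
    have "F k j = cnj (F j k)" if "2 \<le> j" "2 \<le> k"
      using F that unfolding admissible_coeffs_def by blast
    then show "(if j = 1 \<and> k = 1 then 1 else 0) +
        1 / 2 * (graph_series_coeffs F j k + cnj (graph_series_coeffs F k j)) = graph_jet F j k"
      by (simp add: graph_series_coeffs_def graph_jet_def)
  qed
  moreover have "(\<lambda>z. 1 * z ^ 1 * cnj z ^ 1 + 1 / 2 * (graph_series F z + cnj (graph_series F z))) =
      (\<lambda>z. complex_of_real (graph_fun F z))"
    unfolding of_real_graph_fun by (simp add: fun_eq_iff)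
  ultimately show ?thesis
    by simp
qed

lemma graph_fun_tendsto_zero:
  assumes "admissible_coeffs F"
  shows "((\<lambda>z. complex_of_real (graph_fun F z)) \<longlongrightarrow> 0) (nhds 0)"
proof -
  have "jet_poly 0 (graph_jet F) z = 0" for z
    by (simp add: jet_poly_def graph_jet_def graph_series_coeffs_def)
  then have "(\<lambda>z. complex_of_real (graph_fun F z)) \<in> O[nhds 0](\<lambda>z. z)"
    using has_jet_graph_fun[OF assms, of 0] by (simp add: has_jet_def)
  then show ?thesis
    by (rule bigo_nhds0_tendsto_zero)
qed

lemma mult_cnj_expansion_bigo:
  assumes "m \<ge> 2" and f: "(\<lambda>z. f z - a * z - \<beta> * z ^ m) \<in> O[nhds 0](\<lambda>z. z ^ Suc m)"
  shows "(\<lambda>z. f z * cnj (f z) - a * cnj a * z * cnj z - a * cnj \<beta> * z * cnj z ^ m - cnj a * \<beta> * z ^ m * cnj z)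
    \<in> O[nhds 0](\<lambda>z. z ^ Suc (Suc m))"
proof -
  define e where "e z = f z - a * z - \<beta> * z ^ m" for z
  define u where "u z = a * z + \<beta> * z ^ m" for z
  have e: "e \<in> O[nhds 0](\<lambda>z. z ^ Suc m)"
    using f unfolding e_def .
  have "(\<lambda>z. \<beta> * z ^ m) \<in> O[nhds 0](\<lambda>z. z ^ 1)"
    using bigo_power_mono_nhds0[of 1 m, where 'a=complex] \<open>m \<ge> 2\<close> by simp
  then have u: "u \<in> O[nhds 0](\<lambda>z. z)"
    unfolding u_def by (intro sum_in_bigo) simp_all
  have "(\<lambda>z. e z * cnj (u z)) \<in> O[nhds 0](\<lambda>z. z ^ Suc m * z)"
    using e bigo_cnj[OF u] by (rule landau_o.big.mult)
  then have eu: "(\<lambda>z. e z * cnj (u z)) \<in> O[nhds 0](\<lambda>z. z ^ Suc (Suc m))"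
    by (simp only: power_Suc2[of _ "Suc m"])
  have "(\<lambda>z. u z * cnj (e z)) \<in> O[nhds 0](\<lambda>z. z * z ^ Suc m)"
    using u bigo_cnj[OF e] by (rule landau_o.big.mult)
  then have ue: "(\<lambda>z. u z * cnj (e z)) \<in> O[nhds 0](\<lambda>z. z ^ Suc (Suc m))"
    by (simp only: power_Suc[of _ "Suc m"])
  have "(\<lambda>z. e z * cnj (e z)) \<in> O[nhds 0](\<lambda>z. z ^ Suc m * z ^ Suc m)"
    using e bigo_cnj[OF e] by (rule landau_o.big.mult)
  moreover have "(\<lambda>z. z ^ Suc m * z ^ Suc m) \<in> O[nhds 0](\<lambda>z::complex. z ^ Suc (Suc m))"
    unfolding power_add[symmetric] by (rule bigo_power_mono_nhds0) simp
  ultimately have ee: "(\<lambda>z. e z * cnj (e z)) \<in> O[nhds 0](\<lambda>z. z ^ Suc (Suc m))"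
    by (rule landau_o.big_trans)
  have "(\<lambda>z. z ^ m * cnj z ^ m) \<in> O[nhds 0](\<lambda>z. z ^ Suc (Suc m))"
    using \<open>m \<ge> 2\<close> by (intro landau_o.big_trans[OF zcnj_monomial_bigo bigo_power_mono_nhds0]) simp
  then have \<beta>\<beta>: "(\<lambda>z. \<beta> * cnj \<beta> * (z ^ m * cnj z ^ m)) \<in> O[nhds 0](\<lambda>z. z ^ Suc (Suc m))"
    by simp
  have "(\<lambda>z. e z * cnj (u z) + u z * cnj (e z) + e z * cnj (e z) + \<beta> * cnj \<beta> * (z ^ m * cnj z ^ m))
      \<in> O[nhds 0](\<lambda>z. z ^ Suc (Suc m))"
    by (intro sum_in_bigo(1) eu ue ee \<beta>\<beta>)
  moreover have "f z = u z + e z" for z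
    by (simp add: e_def u_def)
  ultimately show ?thesis
    by (simp add: u_def algebra_simps)
qed

lemma has_jet_graph_fun_compose:
  assumes F: "admissible_coeffs F" and "m \<ge> 2"
    and f: "(\<lambda>z. f z - a * z - \<beta> * z ^ m) \<in> O[nhds 0](\<lambda>z. z ^ Suc m)"
  shows "has_jet (\<lambda>z. complex_of_real (graph_fun F (f z))) (Suc m)
    (\<lambda>j k. graph_jet F j k * a ^ j * cnj a ^ k + (if j = 1 \<and> k = m then a * cnj \<beta> else 0)
           + (if j = m \<and> k = 1 then cnj a * \<beta> else 0))"
proof (rule has_jet_perturb)
  show "has_jet (\<lambda>z. complex_of_real (graph_fun F (a * z)) + a * cnj \<beta> * z ^ 1 * cnj z ^ m
      + cnj a * \<beta> * z ^ m * cnj z ^ 1) (Suc m)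
    (\<lambda>j k. graph_jet F j k * a ^ j * cnj a ^ k + (if j = 1 \<and> k = m then a * cnj \<beta> else 0)
           + (if j = m \<and> k = 1 then cnj a * \<beta> else 0))"
    by (intro has_jet_add has_jet_monomial has_jet_scale[OF has_jet_graph_fun[OF F]])
  have "(\<lambda>z. \<beta> * z ^ m) \<in> O[nhds 0](\<lambda>z. z ^ m)"
    by simp
  moreover have "(\<lambda>z. f z - a * z - \<beta> * z ^ m) \<in> O[nhds 0](\<lambda>z. z ^ m)"
    using f bigo_power_mono_nhds0[of m "Suc m"] by (auto intro: landau_o.big_trans)
  ultimately have fa: "(\<lambda>z. f z - a * z) \<in> O[nhds 0](\<lambda>z. z ^ m)"
    using sum_in_bigo(1) by fastforce
  have "(\<lambda>z. z ^ m) \<in> O[nhds 0](\<lambda>z::complex. z ^ 1)"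
    using \<open>m \<ge> 2\<close> by (intro bigo_power_mono_nhds0) simp
  with fa have "(\<lambda>z. (f z - a * z) + a * z) \<in> O[nhds 0](\<lambda>z. z)"
    by (intro sum_in_bigo(1)) (auto intro: landau_o.big_trans)
  then have "f \<in> O[nhds 0](\<lambda>z. z)"
    by simp
  from graph_series_compose_diff_bigo[OF F this _ fa]
  have "(\<lambda>z. graph_series F (f z) - graph_series F (a * z)) \<in> O[nhds 0](\<lambda>z. z ^ (m + 3))"
    by simp
  also have "(\<lambda>z. z ^ (m + 3)) \<in> O[nhds 0](\<lambda>z::complex. z ^ Suc (Suc m))"
    by (rule bigo_power_mono_nhds0) simp
  finally have series: "(\<lambda>z. graph_series F (f z) - graph_series F (a * z)) \<in> O[nhds 0](\<lambda>z. z ^ Suc (Suc m))" .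
  have "(\<lambda>z. 1 / 2 * ((graph_series F (f z) - graph_series F (a * z))
      + cnj (graph_series F (f z) - graph_series F (a * z)))) \<in> O[nhds 0](\<lambda>z. z ^ Suc (Suc m))"
    using sum_in_bigo(1)[OF series bigo_cnj[OF series]] by simp
  with mult_cnj_expansion_bigo[OF \<open>m \<ge> 2\<close> f]
  have "(\<lambda>z. (f z * cnj (f z) - a * cnj a * z * cnj z - a * cnj \<beta> * z * cnj z ^ m - cnj a * \<beta> * z ^ m * cnj z)
      + 1 / 2 * ((graph_series F (f z) - graph_series F (a * z)) + cnj (graph_series F (f z) - graph_series F (a * z))))
      \<in> O[nhds 0](\<lambda>z. z ^ Suc (Suc m))"
    by (rule sum_in_bigo(1))
  then show "(\<lambda>z. complex_of_real (graph_fun F (f z)) - (complex_of_real (graph_fun F (a * z))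
      + a * cnj \<beta> * z ^ 1 * cnj z ^ m + cnj a * \<beta> * z ^ m * cnj z ^ 1)) \<in> O[nhds 0](\<lambda>z. z ^ Suc (Suc m))"
    unfolding of_real_graph_fun by (simp add: algebra_simps diff_divide_distrib add_divide_distrib)
qed

section \<open>Rigid equivalences are linear\<close>

lemma rigid_jet_relations:
  assumes F: "admissible_coeffs F" and F': "admissible_coeffs F'"
    and g: "g holomorphic_on ball 0 r" "r > 0"
    and eq: "eventually (\<lambda>z. \<rho> * graph_fun F z + Re (g z) = graph_fun F' (f z)) (nhds 0)"
    and m: "m \<ge> 2" and f: "(\<lambda>z. f z - a * z - \<beta> * z ^ m) \<in> O[nhds 0](\<lambda>z. z ^ Suc m)"
  shows "a * cnj \<beta> = 0" and "complex_of_real \<rho> = a * cnj a"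
    and "\<And>j k. 2 \<le> j \<Longrightarrow> 2 \<le> k \<Longrightarrow> j + k \<le> Suc m \<Longrightarrow> \<rho> * F j k = F' j k * a ^ j * cnj a ^ k"
proof -
  define gc where "gc j k = (if k = 0 then (deriv ^^ j) g 0 / fact j else 0)" for j k :: nat
  define c where "c j k = \<rho> * graph_jet F j k + 1 / 2 * (gc j k + cnj (gc k j))
    - (graph_jet F' j k * a ^ j * cnj a ^ k + (if j = 1 \<and> k = m then a * cnj \<beta> else 0)
       + (if j = m \<and> k = 1 then cnj a * \<beta> else 0))" for j k
  have "has_jet (\<lambda>z. \<rho> * complex_of_real (graph_fun F z) + 1 / 2 * (g z + cnj (g z))
      - complex_of_real (graph_fun F' (f z))) (Suc m) c"
    unfolding c_def gc_def
    by (intro has_jet_diff has_jet_add has_jet_cmult has_jet_graph_fun has_jet_graph_fun_compose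
        has_jet_cnj has_jet_holomorphic[OF g] F F' m f)
  moreover from eq have "eventually (\<lambda>z. \<rho> * complex_of_real (graph_fun F z) + 1 / 2 * (g z + cnj (g z))
      - complex_of_real (graph_fun F' (f z)) = 0) (nhds 0)"
  proof eventually_elim
    case (elim z)
    then have "complex_of_real (\<rho> * graph_fun F z + Re (g z)) = complex_of_real (graph_fun F' (f z))"
      by simp
    then show ?case
      by (simp add: complex_add_cnj)
  qed
  ultimately have c0: "c j k = 0" if "j + k \<le> Suc m" for j k
    using that by (rule has_jet_eventually_zero_coeffs)
  \<comment> \<open>only the cross term of \<open>\<bar>f z\<bar>\<^sup>2\<close> contributes to the coefficient of \<open>z * cnj z ^ m\<close>\<close>
  show "a * cnj \<beta> = 0"
    using c0[of 1 m] m by (simp add: c_def gc_def graph_jet_def graph_series_coeffs_def)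
  show "complex_of_real \<rho> = a * cnj a"
    using c0[of 1 1] m by (simp add: c_def gc_def graph_jet_def graph_series_coeffs_def)
  show "\<rho> * F j k = F' j k * a ^ j * cnj a ^ k" if "2 \<le> j" "2 \<le> k" "j + k \<le> Suc m" for j k
    using c0[OF that(3)] that by (simp add: c_def gc_def graph_jet_def graph_series_coeffs_def)
qed

lemma rigid_equivalent_imp_linear_scaling:
  assumes F: "admissible_coeffs F" and F': "admissible_coeffs F'" and "rigid_equivalent F F'"
  shows "\<exists>a. a \<noteq> 0 \<and> (\<forall>j\<ge>2. \<forall>k\<ge>2. complex_of_real ((cmod a)\<^sup>2) * F j k = F' j k * a ^ j * cnj a ^ k)"
proof -
  obtain f g \<rho> r e where r: "r > 0" and f: "f holomorphic_on ball 0 r" and g: "g holomorphic_on ball 0 r"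
    and "f 0 = 0" and a: "deriv f 0 \<noteq> 0" and "e > 0"
    and equiv: "\<And>z w. cmod z < e \<Longrightarrow> cmod w < e \<Longrightarrow>
      (Re w = graph_fun F z \<longleftrightarrow> Re (complex_of_real \<rho> * w + g z) = graph_fun F' (f z))"
    using assms(3) unfolding rigid_equivalent_def by metis
  define a where "a = deriv f 0"
  from eventually_nhds0_norm_less[OF \<open>e > 0\<close>] tendstoD[OF graph_fun_tendsto_zero[OF F] \<open>e > 0\<close>]
  have eq: "eventually (\<lambda>z. \<rho> * graph_fun F z + Re (g z) = graph_fun F' (f z)) (nhds 0)"
  proof eventually_elim
    case (elim z)
    \<comment> \<open>\<open>(z, graph_fun F z)\<close> lies on the first hypersurface\<close>
    then show ?case
      using equiv[of z "complex_of_real (graph_fun F z)"] by simp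
  qed
  have expansion: "(\<lambda>z. f z - a * z - (deriv ^^ m) f 0 / fact m * z ^ m) \<in> O[nhds 0](\<lambda>z. z ^ Suc m)"
    if "m \<ge> 2" "\<And>i. 2 \<le> i \<Longrightarrow> i < m \<Longrightarrow> (deriv ^^ i) f 0 = 0" for m
    unfolding a_def by (rule holomorphic_expansion_first_nonlinear[OF f r \<open>f 0 = 0\<close> that])
  have nonlinear_zero: "(deriv ^^ m) f 0 = 0" if "m \<ge> 2" for m
    using that
  proof (induction m rule: less_induct)
    case (less m)
    from rigid_jet_relations(1)[OF F F' g r eq less.prems expansion[OF less.prems less.IH]]
    show ?case using a by (simp add: a_def)
  qed
  have linear: "(\<lambda>z. f z - a * z - 0 * z ^ m) \<in> O[nhds 0](\<lambda>z. z ^ Suc m)" if "m \<ge> 2" for m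
    using expansion[OF that nonlinear_zero] nonlinear_zero[OF that] by simp
  have "complex_of_real ((cmod a)\<^sup>2) = complex_of_real \<rho>"
    using complex_norm_square[of a] rigid_jet_relations(2)[OF F F' g r eq _ linear, of 2] by (simp only:)
  moreover have "complex_of_real \<rho> * F j k = F' j k * a ^ j * cnj a ^ k" if "2 \<le> j" "2 \<le> k" for j k
    using rigid_jet_relations(3)[OF F F' g r eq _ linear, of "j + k - 1" j k] that by simp
  ultimately show ?thesis
    using a unfolding a_def by auto
qed

lemma graph_fun_linear_scaling:
  assumes "\<forall>j\<ge>2. \<forall>k\<ge>2. complex_of_real ((cmod a)\<^sup>2) * F j k = F' j k * a ^ j * cnj a ^ k"
  shows "graph_fun F' (a * z) = (cmod a)\<^sup>2 * graph_fun F z"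
proof -
  have "graph_series F' (a * z) = (\<Sum>\<^sub>\<infinity>(j, k)\<in>{2..} \<times> {2..}. complex_of_real ((cmod a)\<^sup>2) * (F j k * z ^ j * cnj z ^ k))"
    unfolding graph_series_def using assms
    by (intro infsum_cong) (auto simp: power_mult_distrib mult_ac)
  also have "\<dots> = complex_of_real ((cmod a)\<^sup>2) * graph_series F z"
    unfolding graph_series_def by (subst infsum_cmult_right'[symmetric]) (simp add: case_prod_unfold)
  finally show ?thesis
    unfolding graph_fun_def graph_series_def[symmetric] by (simp add: norm_mult power_mult_distrib algebra_simps)
qed

lemma linear_scaling_imp_rigid_equivalent:
  assumes "a \<noteq> 0" and "\<forall>j\<ge>2. \<forall>k\<ge>2. complex_of_real ((cmod a)\<^sup>2) * F j k = F' j k * a ^ j * cnj a ^ k"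
  shows "rigid_equivalent F F'"
  unfolding rigid_equivalent_def
proof (intro exI conjI)
  show "(\<lambda>z. a * z) holomorphic_on ball 0 1" "(\<lambda>z. 0) holomorphic_on ball 0 1"
    by (intro holomorphic_intros)+
  show "deriv (\<lambda>z. a * z) 0 \<noteq> 0" "(cmod a)\<^sup>2 \<noteq> 0"
    using assms(1) by simp_all
  show "\<forall>z w. cmod z < 1 \<and> cmod w < 1 \<longrightarrow>
      (Re w = graph_fun F z) = (Re (complex_of_real ((cmod a)\<^sup>2) * w + 0) = graph_fun F' (a * z))"
    using assms by (simp add: graph_fun_linear_scaling)
qed auto

lemma cis_power_cnj_power:
  fixes j k :: nat
  shows "cis \<phi> ^ j * cnj (cis \<phi>) ^ k = exp (\<i> * complex_of_real (\<phi> * (real j - real k)))"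
proof -
  have "cis \<phi> ^ j * cnj (cis \<phi>) ^ k = cis (real j * \<phi>) * cis (real k * - \<phi>)"
    by (simp only: cis_cnj Complex.DeMoivre)
  also have "\<dots> = cis (\<phi> * (real j - real k))"
    by (simp add: cis_mult algebra_simps)
  finally show ?thesis
    by (simp add: cis_conv_exp)
qed

lemma sqrt_power_eq_powr:
  assumes "\<rho> > 0" "2 \<le> j + k"
  shows "sqrt \<rho> ^ (j + k) = \<rho> * \<rho> powr ((real j + real k - 2) / 2)"
proof -
  have "sqrt \<rho> ^ (j + k) = \<rho> powr (real (j + k) / 2)"
    using assms(1) by (simp add: powr_half_sqrt[symmetric] powr_realpow[symmetric] powr_powr)
  also have "real (j + k) / 2 = 1 + (real j + real k - 2) / 2"
    by (simp add: field_simps)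
  finally show ?thesis
    using assms(1) by (simp add: powr_add)
qed

lemma polar_scaling_relation:
  fixes \<rho> \<phi> :: real
  assumes "\<rho> > 0" "2 \<le> j" "2 \<le> k"
  defines "a \<equiv> complex_of_real (sqrt \<rho>) * cis \<phi>"
  shows "complex_of_real ((cmod a)\<^sup>2) * F j k = F' j k * a ^ j * cnj a ^ k \<longleftrightarrow>
    F j k = complex_of_real (\<rho> powr ((real j + real k - 2) / 2))
      * exp (\<i> * complex_of_real (\<phi> * (real j - real k))) * F' j k"
    (is "_ \<longleftrightarrow> F j k = ?P * F' j k")
proof -
  have norm: "(cmod a)\<^sup>2 = \<rho>"
    using assms(1) by (simp add: a_def norm_mult)
  have "a ^ j * cnj a ^ k = complex_of_real (sqrt \<rho> ^ (j + k)) * (cis \<phi> ^ j * cnj (cis \<phi>) ^ k)"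
    by (simp add: a_def power_mult_distrib power_add)
  also have "\<dots> = complex_of_real \<rho> * ?P"
    using assms(1-3) by (simp add: sqrt_power_eq_powr cis_power_cnj_power)
  finally have scaled: "F' j k * a ^ j * cnj a ^ k = complex_of_real \<rho> * (?P * F' j k)"
    by (simp add: mult.assoc mult.left_commute[of "F' j k"])
  have "complex_of_real ((cmod a)\<^sup>2) * F j k = F' j k * a ^ j * cnj a ^ k \<longleftrightarrow>
      complex_of_real \<rho> * F j k = complex_of_real \<rho> * (?P * F' j k)"
    unfolding norm scaled ..
  also have "\<dots> \<longleftrightarrow> F j k = ?P * F' j k"
    using assms(1) by simp
  finally show ?thesis .
qed

lemma linear_scaling_iff_polar:
  "(\<exists>a. a \<noteq> 0 \<and> (\<forall>j\<ge>2. \<forall>k\<ge>2. complex_of_real ((cmod a)\<^sup>2) * F j k = F' j k * a ^ j * cnj a ^ k)) \<longleftrightarrow>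
   (\<exists>\<rho>::real. \<rho> > 0 \<and> (\<exists>\<phi>::real. \<forall>j\<ge>2. \<forall>k\<ge>2.
      F j k = complex_of_real (\<rho> powr ((real j + real k - 2) / 2))
        * exp (\<i> * complex_of_real (\<phi> * (real j - real k))) * F' j k))"
    (is "(\<exists>a. a \<noteq> 0 \<and> ?scaling a) \<longleftrightarrow> (\<exists>\<rho>. \<rho> > 0 \<and> (\<exists>\<phi>. ?polar \<rho> \<phi>))")
proof
  assume "\<exists>a. a \<noteq> 0 \<and> ?scaling a"
  then obtain a where "a \<noteq> 0" and rel: "?scaling a"
    by blast
  then have pos: "(cmod a)\<^sup>2 > 0" by simp
  have a: "a = complex_of_real (sqrt ((cmod a)\<^sup>2)) * cis (Arg a)"
    using rcis_cmod_Arg[of a] by (simp add: rcis_def)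
  have "?polar ((cmod a)\<^sup>2) (Arg a)"
  proof (intro allI impI)
    fix j k :: nat assume "2 \<le> j" "2 \<le> k"
    with rel have "complex_of_real ((cmod a)\<^sup>2) * F j k = F' j k * a ^ j * cnj a ^ k"
      by blast
    then show "F j k = complex_of_real ((cmod a)\<^sup>2 powr ((real j + real k - 2) / 2))
        * exp (\<i> * complex_of_real (Arg a * (real j - real k))) * F' j k"
      by (rule polar_scaling_relation[OF pos \<open>2 \<le> j\<close> \<open>2 \<le> k\<close>, where \<phi> = "Arg a", folded a, THEN iffD1])
  qed
  with pos show "\<exists>\<rho>. \<rho> > 0 \<and> (\<exists>\<phi>. ?polar \<rho> \<phi>)"
    by blast
next
  assume "\<exists>\<rho>. \<rho> > 0 \<and> (\<exists>\<phi>. ?polar \<rho> \<phi>)"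
  then obtain \<rho> \<phi> where "\<rho> > 0" and "?polar \<rho> \<phi>"
    by blast
  have "?scaling (complex_of_real (sqrt \<rho>) * cis \<phi>)"
  proof (intro allI impI)
    fix j k :: nat assume "2 \<le> j" "2 \<le> k"
    with \<open>?polar \<rho> \<phi>\<close> show "complex_of_real ((cmod (complex_of_real (sqrt \<rho>) * cis \<phi>))\<^sup>2) * F j k
        = F' j k * (complex_of_real (sqrt \<rho>) * cis \<phi>) ^ j * cnj (complex_of_real (sqrt \<rho>) * cis \<phi>) ^ k"
      using polar_scaling_relation[OF \<open>\<rho> > 0\<close> \<open>2 \<le> j\<close> \<open>2 \<le> k\<close>, where \<phi> = \<phi>] by blast
  qed
  moreover have "complex_of_real (sqrt \<rho>) * cis \<phi> \<noteq> 0"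
    using \<open>\<rho> > 0\<close> by simp
  ultimately show "\<exists>a. a \<noteq> 0 \<and> ?scaling a"
    by blast
qed

theorem corollary2p13:
  fixes F F' :: "nat \<Rightarrow> nat \<Rightarrow> complex"
  assumes "admissible_coeffs F" and "admissible_coeffs F'"
  shows "rigid_equivalent F F' \<longleftrightarrow>
    (\<exists>\<rho>::real. \<rho> > 0 \<and> (\<exists>\<phi>::real. \<forall>j\<ge>2. \<forall>k\<ge>2.
        F j k = complex_of_real (\<rho> powr ((real j + real k - 2) / 2))
                * exp (\<i> * complex_of_real (\<phi> * (real j - real k))) * F' j k))"
  unfolding linear_scaling_iff_polar[symmetric]
  using rigid_equivalent_imp_linear_scaling[OF assms] linear_scaling_imp_rigid_equivalent by blast

end
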